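(* Let $A,C$ be groups, $i_P,i_N:C\to A$ injective homomorphisms, $H=\langle A,t\mid i_N(c)=t\,i_P(c)\,t^{-1}\ \forall c\in C\rangle$, and $p:H\to\mathbb Z$ the epimorphism with $p(t)=1$, $p(A)=0$. For $k\ge0$ let $A_k\le H$ be the subgroup generated by all $t^{-i}at^{i}$ with $a\in A$, $0\le i\le k$, and let $A_{-1}=i_N(C)$. Let $w\in H$ with $p(w)=1$. Then either $w$ is conjugate to $at$ for some $a\in A$, or there is some $k\in\mathbb Z_{>0}$ and $m\ge1$ such that a conjugate of $w$ can be written as $a_1t^{-1}b_1t\cdots a_mt^{-1}b_mt\,x\,t$ with $a_i\in A_{k-1}\setminus t^{-1}A_{k-2}t$, $b_i\in A_{k-1}\setminus A_{k-2}$, and $x\in A_{k-1}$. *)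

theory Defs
  imports "HOL-Algebra.Algebra"
begin

text \<open>Concrete construction of the HNN extension
  H = < A, t | iN(c) = t iP(c) t^-1 (c in C) >
  as the quotient of the monoid of words over the alphabet
  (carrier A) + {t, t^-1} by the congruence generated by the relations of A,
  the free-group relations for t, and the HNN relations.
  Letters: Inl a is the generator a of A, Inr True is t, Inr False is t^-1.\<close>

type_synonym 'a hnn_word = "('a + bool) list"

definition hnn_words :: "('a, 'm) monoid_scheme \<Rightarrow> 'a hnn_word set" where
  "hnn_words A = {w. \<forall>a. Inl a \<in> set w \<longrightarrow> a \<in> carrier A}"

inductive hnn_basic ::
  "('a, 'm) monoid_scheme \<Rightarrow> ('c, 'n) monoid_scheme \<Rightarrow> ('c \<Rightarrow> 'a) \<Rightarrow> ('c \<Rightarrow> 'a)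
   \<Rightarrow> 'a hnn_word \<Rightarrow> 'a hnn_word \<Rightarrow> bool"
  for A C iP iN where
  mult_rel: "a \<in> carrier A \<Longrightarrow> b \<in> carrier A \<Longrightarrow>
     hnn_basic A C iP iN [Inl a, Inl b] [Inl (a \<otimes>\<^bsub>A\<^esub> b)]"
| one_rel: "hnn_basic A C iP iN [Inl \<one>\<^bsub>A\<^esub>] []"
| t_inv1: "hnn_basic A C iP iN [Inr True, Inr False] []"
| t_inv2: "hnn_basic A C iP iN [Inr False, Inr True] []"
| hnn_rel: "c \<in> carrier C \<Longrightarrow>
     hnn_basic A C iP iN [Inl (iN c)] [Inr True, Inl (iP c), Inr False]"

definition hnn_eq ::
  "('a, 'm) monoid_scheme \<Rightarrow> ('c, 'n) monoid_scheme \<Rightarrow> ('c \<Rightarrow> 'a) \<Rightarrow> ('c \<Rightarrow> 'a)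
   \<Rightarrow> 'a hnn_word \<Rightarrow> 'a hnn_word \<Rightarrow> bool" where
  "hnn_eq A C iP iN = equivclp
     (\<lambda>x y. \<exists>u v l r. hnn_basic A C iP iN l r \<and> x = u @ l @ v \<and> y = u @ r @ v)"

definition hnn_class ::
  "('a, 'm) monoid_scheme \<Rightarrow> ('c, 'n) monoid_scheme \<Rightarrow> ('c \<Rightarrow> 'a) \<Rightarrow> ('c \<Rightarrow> 'a)
   \<Rightarrow> 'a hnn_word \<Rightarrow> 'a hnn_word set" where
  "hnn_class A C iP iN w = {w' \<in> hnn_words A. hnn_eq A C iP iN w w'}"

definition HNN ::
  "('a, 'm) monoid_scheme \<Rightarrow> ('c, 'n) monoid_scheme \<Rightarrow> ('c \<Rightarrow> 'a) \<Rightarrow> ('c \<Rightarrow> 'a)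
   \<Rightarrow> 'a hnn_word set monoid" where
  "HNN A C iP iN =
     \<lparr> carrier = hnn_class A C iP iN ` hnn_words A,
       monoid.mult = (\<lambda>U V. hnn_class A C iP iN ((SOME x. x \<in> U) @ (SOME y. y \<in> V))),
       one = hnn_class A C iP iN [] \<rparr>"

definition hnn_incl ::
  "('a, 'm) monoid_scheme \<Rightarrow> ('c, 'n) monoid_scheme \<Rightarrow> ('c \<Rightarrow> 'a) \<Rightarrow> ('c \<Rightarrow> 'a)
   \<Rightarrow> 'a \<Rightarrow> 'a hnn_word set" where
  "hnn_incl A C iP iN a = hnn_class A C iP iN [Inl a]"

definition hnn_t ::
  "('a, 'm) monoid_scheme \<Rightarrow> ('c, 'n) monoid_scheme \<Rightarrow> ('c \<Rightarrow> 'a) \<Rightarrow> ('c \<Rightarrow> 'a)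
   \<Rightarrow> 'a hnn_word set" where
  "hnn_t A C iP iN = hnn_class A C iP iN [Inr True]"

fun letter_exp :: "'a + bool \<Rightarrow> int" where
  "letter_exp (Inl a) = 0"
| "letter_exp (Inr b) = (if b then 1 else -1)"

definition hnn_p :: "'a hnn_word set \<Rightarrow> int" where
  "hnn_p U = sum_list (map letter_exp (SOME x. x \<in> U))"

text \<open>The subgroups A_k: for k >= 0 generated by t^-i a t^i, a in A, 0 <= i <= k;
  A_{-1} = iN(C). (Values for k < -1 are irrelevant.)\<close>
definition hnn_Ak ::
  "('a, 'm) monoid_scheme \<Rightarrow> ('c, 'n) monoid_scheme \<Rightarrow> ('c \<Rightarrow> 'a) \<Rightarrow> ('c \<Rightarrow> 'a)
   \<Rightarrow> int \<Rightarrow> 'a hnn_word set set" where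
  "hnn_Ak A C iP iN k =
     (if k = -1 then hnn_incl A C iP iN ` iN ` carrier C
      else if k \<ge> 0 then
        generate (HNN A C iP iN)
          {inv\<^bsub>HNN A C iP iN\<^esub> (hnn_t A C iP iN [^]\<^bsub>HNN A C iP iN\<^esub> i)
             \<otimes>\<^bsub>HNN A C iP iN\<^esub> hnn_incl A C iP iN a
             \<otimes>\<^bsub>HNN A C iP iN\<^esub> (hnn_t A C iP iN [^]\<^bsub>HNN A C iP iN\<^esub> i)
           | a i. a \<in> carrier A \<and> i \<le> nat k}
      else {})"

fun alt_prod :: "('g, 'b) monoid_scheme \<Rightarrow> 'g \<Rightarrow> (nat \<Rightarrow> 'g) \<Rightarrow> (nat \<Rightarrow> 'g) \<Rightarrow> nat \<Rightarrow> 'g" where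
  "alt_prod G t a b 0 = \<one>\<^bsub>G\<^esub>"
| "alt_prod G t a b (Suc n) =
     alt_prod G t a b n \<otimes>\<^bsub>G\<^esub> (a (Suc n) \<otimes>\<^bsub>G\<^esub> inv\<^bsub>G\<^esub> t \<otimes>\<^bsub>G\<^esub> b (Suc n) \<otimes>\<^bsub>G\<^esub> t)"

end

theory Submission
  imports Defs
begin

(*
  Every element of the HNN extension is t^j y t^-j t^e with y in some A_n and e the exponent
  sum of t, so w is conjugate to y t with y in A_n. For n = 0 this is the first alternative.
  For n > 0, A_n is generated by A_(n-1) and t^-1 A_(n-1) t, so
  y t = a_1 t^-1 b_1 t ... a_m t^-1 b_m t x t with all a_i, b_i, x in A_(n-1).
  A syllable with b_i in A_(n-2) lies in A_(n-1) and is absorbed by its right neighbour;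
  a syllable with a_i = t^-1 d t, d in A_(n-2), merges with its left neighbour into
  a_(i-1) t^-1 (b_(i-1) d b_i) t, or, for i = 1, is conjugated round to the end and absorbed by x.
  Each step shortens the word. Either no syllable survives, leaving y' t with y' in A_(n-1),
  and we recurse on n; or what survives is the second alternative with k = n.
*)

section \<open>Conjugacy and syllable words\<close>

definition conjugate :: "('g, 'b) monoid_scheme \<Rightarrow> 'g \<Rightarrow> 'g \<Rightarrow> bool" where
  "conjugate G u v \<longleftrightarrow> (\<exists>g \<in> carrier G. g \<otimes>\<^bsub>G\<^esub> u \<otimes>\<^bsub>G\<^esub> inv\<^bsub>G\<^esub> g = v)"

abbreviation conj_set :: "('g, 'b) monoid_scheme \<Rightarrow> 'g \<Rightarrow> 'g set \<Rightarrow> 'g set" where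
  "conj_set G t S \<equiv> {inv\<^bsub>G\<^esub> t \<otimes>\<^bsub>G\<^esub> y \<otimes>\<^bsub>G\<^esub> t | y. y \<in> S}"

fun syllable_prod :: "('g, 'b) monoid_scheme \<Rightarrow> 'g \<Rightarrow> ('g \<times> 'g) list \<Rightarrow> 'g" where
  "syllable_prod G t [] = \<one>\<^bsub>G\<^esub>"
| "syllable_prod G t ((a, b) # ps) =
     a \<otimes>\<^bsub>G\<^esub> inv\<^bsub>G\<^esub> t \<otimes>\<^bsub>G\<^esub> b \<otimes>\<^bsub>G\<^esub> t \<otimes>\<^bsub>G\<^esub> syllable_prod G t ps"

context group
begin

lemma inv_mult_cancel_left [simp]: "x \<in> carrier G \<Longrightarrow> y \<in> carrier G \<Longrightarrow> inv x \<otimes> (x \<otimes> y) = y"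
  by (simp add: m_assoc [symmetric])

lemma mult_inv_cancel_left [simp]: "x \<in> carrier G \<Longrightarrow> y \<in> carrier G \<Longrightarrow> x \<otimes> (inv x \<otimes> y) = y"
  by (simp add: m_assoc [symmetric])

lemma conjugate_refl: "u \<in> carrier G \<Longrightarrow> conjugate G u u"
  unfolding conjugate_def by (intro bexI[of _ \<one>]) auto

lemma conjugateI: "g \<in> carrier G \<Longrightarrow> g \<otimes> u \<otimes> inv g = v \<Longrightarrow> conjugate G u v"
  unfolding conjugate_def by blast

lemma conjugate_trans:
  assumes "u \<in> carrier G" "conjugate G u v" "conjugate G v w"
  shows "conjugate G u w"
proof -
  obtain g h where gh: "g \<in> carrier G" "h \<in> carrier G"
    and "v = g \<otimes> u \<otimes> inv g" "w = h \<otimes> v \<otimes> inv h"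
    using assms(2,3) unfolding conjugate_def by metis
  then have "(h \<otimes> g) \<otimes> u \<otimes> inv (h \<otimes> g) = w"
    using assms(1) by (simp add: inv_mult_group m_assoc)
  then show ?thesis using gh by (intro conjugateI[of "h \<otimes> g"]) auto
qed

lemma syllable_prod_closed [simp]:
  "t \<in> carrier G \<Longrightarrow> set ps \<subseteq> carrier G \<times> carrier G \<Longrightarrow> syllable_prod G t ps \<in> carrier G"
  by (induction ps) auto

lemma syllable_prod_append:
  assumes "t \<in> carrier G" "set ps \<subseteq> carrier G \<times> carrier G" "set qs \<subseteq> carrier G \<times> carrier G"
  shows "syllable_prod G t (ps @ qs) = syllable_prod G t ps \<otimes> syllable_prod G t qs"
  using assms(2) by (induction ps) (use assms in \<open>auto simp: m_assoc\<close>)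

lemma syllable_prod_merge:
  assumes "t \<in> carrier G" "a \<in> carrier G" "b \<in> carrier G" "d \<in> carrier G" "a' \<in> carrier G"
    "b' \<in> carrier G" "set ps \<subseteq> carrier G \<times> carrier G"
  shows "syllable_prod G t ((a, b) # (inv t \<otimes> d \<otimes> t, b') # ps)
    = syllable_prod G t ((a, b \<otimes> d \<otimes> b') # ps)"
  using assms by (simp add: m_assoc)

lemma syllable_prod_Cons_conj:
  assumes "t \<in> carrier G" "d \<in> carrier G" "b \<in> carrier G" "set ps \<subseteq> carrier G \<times> carrier G"
  shows "syllable_prod G t ((inv t \<otimes> d \<otimes> t, b) # ps) = inv t \<otimes> (d \<otimes> b) \<otimes> t \<otimes> syllable_prod G t ps"
  using assms by (simp add: m_assoc)

lemma alt_prod_eq_syllable_prod_take: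
  assumes "t \<in> carrier G" "set ps \<subseteq> carrier G \<times> carrier G" "n \<le> length ps"
  shows "alt_prod G t (\<lambda>i. fst (ps ! (i - 1))) (\<lambda>i. snd (ps ! (i - 1))) n
    = syllable_prod G t (take n ps)"
  using assms(3)
proof (induction n)
  case (Suc n)
  define a b where "a = fst (ps ! n)" and "b = snd (ps ! n)"
  have "(a, b) \<in> set ps" using Suc.prems unfolding a_def b_def by simp
  then have ab: "a \<in> carrier G" "b \<in> carrier G" using assms(2) by auto
  have "set (take n ps) \<subseteq> carrier G \<times> carrier G"
    by (rule order_trans[OF set_take_subset assms(2)])
  moreover have "take (Suc n) ps = take n ps @ [(a, b)]"
    using Suc.prems unfolding a_def b_def by (simp add: take_Suc_conv_app_nth)
  ultimately have "syllable_prod G t (take (Suc n) ps)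
      = syllable_prod G t (take n ps) \<otimes> (a \<otimes> inv t \<otimes> b \<otimes> t)"
    using ab assms(1) syllable_prod_append[of t "take n ps" "[(a, b)]"] by simp
  then show ?case using Suc unfolding a_def b_def by simp
qed simp

lemma alt_prod_eq_syllable_prod:
  "t \<in> carrier G \<Longrightarrow> set ps \<subseteq> carrier G \<times> carrier G \<Longrightarrow>
   alt_prod G t (\<lambda>i. fst (ps ! (i - 1))) (\<lambda>i. snd (ps ! (i - 1))) (length ps) = syllable_prod G t ps"
  using alt_prod_eq_syllable_prod_take[of t ps "length ps"] by simp

end

locale syllable_subgroup = group G for G (structure) +
  fixes t :: 'a and U :: "'a set"
  assumes t_closed [simp]: "t \<in> carrier G" and subgroup_U: "subgroup U G"
begin

lemma U_closed [simp]: "x \<in> U \<Longrightarrow> x \<in> carrier G"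
  using subgroup.mem_carrier[OF subgroup_U] .

lemma pairs_closed: "set ps \<subseteq> U \<times> U \<Longrightarrow> set ps \<subseteq> carrier G \<times> carrier G"
  by auto

lemma absorb_into_syllables:
  assumes "c \<in> U" "set ps \<subseteq> U \<times> U" "x \<in> U"
  obtains ps' x' where "length ps' = length ps" "set ps' \<subseteq> U \<times> U" "x' \<in> U"
    "c \<otimes> (syllable_prod G t ps \<otimes> x) = syllable_prod G t ps' \<otimes> x'"
proof (cases ps)
  case Nil
  then show ?thesis
    using that[of "[]" "c \<otimes> x"] assms subgroup.m_closed[OF subgroup_U] by (simp add: m_assoc)
next
  case (Cons p qs)
  obtain a b where p: "p = (a, b)" by fastforce
  then show ?thesis
    using that[of "(c \<otimes> a, b) # qs" x] assms subgroup.m_closed[OF subgroup_U] Cons pairs_closed[of qs]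
    by (auto simp: m_assoc)
qed

lemma generate_syllables:
  assumes "y \<in> generate G (U \<union> conj_set G t U)"
  shows "\<exists>ps x. set ps \<subseteq> U \<times> U \<and> x \<in> U \<and> y = syllable_prod G t ps \<otimes> x"
  using assms
proof (induction rule: generate.induct)
  case one
  show ?case using subgroup.one_closed[OF subgroup_U] by (intro exI[of _ "[]"] exI[of _ \<one>]) simp
next
  case (incl h)
  then show ?case
  proof
    assume "h \<in> U"
    then show ?thesis by (intro exI[of _ "[]"] exI[of _ h]) simp
  next
    assume "h \<in> conj_set G t U"
    then obtain b where "b \<in> U" "h = inv t \<otimes> b \<otimes> t" by blast
    then show ?thesis using subgroup.one_closed[OF subgroup_U]
      by (intro exI[of _ "[(\<one>, b)]"] exI[of _ \<one>]) simp
  qed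
next
  case (inv h)
  then show ?case
  proof
    assume "h \<in> U"
    then show ?thesis using subgroup.m_inv_closed[OF subgroup_U]
      by (intro exI[of _ "[]"] exI[of _ "inv h"]) simp
  next
    assume "h \<in> conj_set G t U"
    then obtain b where b: "b \<in> U" "h = inv t \<otimes> b \<otimes> t" by blast
    then have "inv h = inv t \<otimes> inv b \<otimes> t" by (simp add: inv_mult_group m_assoc)
    then show ?thesis using b subgroup.one_closed[OF subgroup_U] subgroup.m_inv_closed[OF subgroup_U]
      by (intro exI[of _ "[(\<one>, inv b)]"] exI[of _ \<one>]) simp
  qed
next
  case (eng h1 h2)
  then obtain ps1 x1 ps2 x2 where ps: "set ps1 \<subseteq> U \<times> U" "x1 \<in> U" "set ps2 \<subseteq> U \<times> U" "x2 \<in> U"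
    and h: "h1 = syllable_prod G t ps1 \<otimes> x1" "h2 = syllable_prod G t ps2 \<otimes> x2"
    by blast
  obtain ps2' x2' where ps2': "set ps2' \<subseteq> U \<times> U" "x2' \<in> U"
    "x1 \<otimes> (syllable_prod G t ps2 \<otimes> x2) = syllable_prod G t ps2' \<otimes> x2'"
    using absorb_into_syllables[OF ps(2,3,4)] by metis
  have "h1 \<otimes> h2 = syllable_prod G t (ps1 @ ps2') \<otimes> x2'"
    using ps ps2' pairs_closed syllable_prod_append by (simp add: h m_assoc)
  then show ?case using ps ps2' by (intro exI[of _ "ps1 @ ps2'"] exI[of _ x2']) simp
qed

end

section \<open>Shortening syllable words\<close>

locale syllable_reduction = syllable_subgroup +
  fixes D :: "'a set"
  assumes D_subset: "D \<subseteq> U" and conj_D_subset: "conj_set G t D \<subseteq> U"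
begin

lemma shorten_at_D:
  assumes "set (ps @ (a, b) # qs) \<subseteq> U \<times> U" "b \<in> D" "x \<in> U"
  obtains ps' x' where "length ps' < length (ps @ (a, b) # qs)" "set ps' \<subseteq> U \<times> U" "x' \<in> U"
    "syllable_prod G t (ps @ (a, b) # qs) \<otimes> x = syllable_prod G t ps' \<otimes> x'"
proof -
  have ab: "a \<in> U" "b \<in> U" and ps: "set ps \<subseteq> U \<times> U" and qs: "set qs \<subseteq> U \<times> U"
    using assms(1) by auto
  have "a \<otimes> (inv t \<otimes> b \<otimes> t) \<in> U"
    using ab assms(2) conj_D_subset subgroup.m_closed[OF subgroup_U] by blast
  then obtain qs' x' where qs': "length qs' = length qs" "set qs' \<subseteq> U \<times> U" "x' \<in> U"
    "a \<otimes> (inv t \<otimes> b \<otimes> t) \<otimes> (syllable_prod G t qs \<otimes> x) = syllable_prod G t qs' \<otimes> x'"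
    using absorb_into_syllables[OF _ qs assms(3)] by metis
  have "syllable_prod G t (ps @ (a, b) # qs) \<otimes> x = syllable_prod G t (ps @ qs') \<otimes> x'"
    using ab ps qs qs' assms(3) pairs_closed
    by (simp add: syllable_prod_append m_assoc flip: qs'(4))
  then show ?thesis using that[of "ps @ qs'" x'] ps qs' by simp
qed

lemma shorten_at_conj_D:
  assumes "set (ps @ (a, b) # (inv t \<otimes> d \<otimes> t, b') # qs) \<subseteq> U \<times> U" "d \<in> D"
  defines "ps' \<equiv> ps @ (a, b \<otimes> d \<otimes> b') # qs"
  shows "length ps' < length (ps @ (a, b) # (inv t \<otimes> d \<otimes> t, b') # qs)" "set ps' \<subseteq> U \<times> U"
    "syllable_prod G t (ps @ (a, b) # (inv t \<otimes> d \<otimes> t, b') # qs) = syllable_prod G t ps'"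
proof -
  have U: "a \<in> U" "b \<in> U" "b' \<in> U" "d \<in> U" "set ps \<subseteq> U \<times> U" "set qs \<subseteq> U \<times> U"
    using assms(1,2) D_subset by auto
  then show "length ps' < length (ps @ (a, b) # (inv t \<otimes> d \<otimes> t, b') # qs)" "set ps' \<subseteq> U \<times> U"
    unfolding ps'_def using subgroup.m_closed[OF subgroup_U] by auto
  have "syllable_prod G t ((a, b) # (inv t \<otimes> d \<otimes> t, b') # qs)
      = syllable_prod G t ((a, b \<otimes> d \<otimes> b') # qs)"
    using U pairs_closed by (intro syllable_prod_merge) auto
  then show "syllable_prod G t (ps @ (a, b) # (inv t \<otimes> d \<otimes> t, b') # qs) = syllable_prod G t ps'"
    unfolding ps'_def using U pairs_closed[of ps] pairs_closed[of qs] subgroup.m_closed[OF subgroup_U]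
    by (subst (1 2) syllable_prod_append) auto
qed

lemma shorten_at_head:
  assumes "set ((inv t \<otimes> d \<otimes> t, b) # ps) \<subseteq> U \<times> U" "d \<in> D" "x \<in> U"
  shows "d \<otimes> b \<in> U"
    "conjugate G (syllable_prod G t ((inv t \<otimes> d \<otimes> t, b) # ps) \<otimes> x \<otimes> t)
       (syllable_prod G t ps \<otimes> (x \<otimes> (d \<otimes> b)) \<otimes> t)"
proof -
  have U: "b \<in> U" "d \<in> U" "set ps \<subseteq> U \<times> U" using assms(1,2) D_subset by auto
  then show "d \<otimes> b \<in> U" using subgroup.m_closed[OF subgroup_U] by blast
  define h where "h = inv t \<otimes> (d \<otimes> b) \<otimes> t"
  define R where "R = syllable_prod G t ps"
  have hR: "h \<in> carrier G" "R \<in> carrier G" using U pairs_closed unfolding h_def R_def by auto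
  have "syllable_prod G t ((inv t \<otimes> d \<otimes> t, b) # ps) = h \<otimes> R"
    using U pairs_closed unfolding h_def R_def by (intro syllable_prod_Cons_conj) auto
  then have "inv h \<otimes> (syllable_prod G t ((inv t \<otimes> d \<otimes> t, b) # ps) \<otimes> x \<otimes> t) \<otimes> inv (inv h)
      = R \<otimes> x \<otimes> t \<otimes> h"
    using hR assms(3) by (simp add: m_assoc)
  also have "\<dots> = R \<otimes> (x \<otimes> (d \<otimes> b)) \<otimes> t"
    using hR U assms(3) unfolding h_def by (simp add: m_assoc)
  finally show "conjugate G (syllable_prod G t ((inv t \<otimes> d \<otimes> t, b) # ps) \<otimes> x \<otimes> t)
       (syllable_prod G t ps \<otimes> (x \<otimes> (d \<otimes> b)) \<otimes> t)"
    using hR unfolding R_def by (intro conjugateI[of "inv h"]) auto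
qed

lemma unreduced_cases:
  assumes "set ps \<subseteq> U \<times> U" "\<not> set ps \<subseteq> (U - conj_set G t D) \<times> (U - D)"
  obtains (at_D) ps1 a b ps2 where "ps = ps1 @ (a, b) # ps2" "b \<in> D"
    | (head) d b ps2 where "ps = (inv t \<otimes> d \<otimes> t, b) # ps2" "d \<in> D"
    | (later) ps1 a b d b' ps2 where "ps = ps1 @ (a, b) # (inv t \<otimes> d \<otimes> t, b') # ps2" "d \<in> D"
proof -
  obtain a b where ab: "(a, b) \<in> set ps" "a \<in> conj_set G t D \<or> b \<in> D"
    using assms by auto
  then obtain ps1 ps2 where ps: "ps = ps1 @ (a, b) # ps2" by (meson split_list)
  show thesis
  proof (cases "b \<in> D")
    case True
    then show ?thesis using ps at_D by blast
  next
    case False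
    then obtain d where d: "a = inv t \<otimes> d \<otimes> t" "d \<in> D" using ab(2) by blast
    show ?thesis
    proof (cases ps1 rule: rev_exhaust)
      case Nil
      then show ?thesis using head ps d by simp
    next
      case (snoc ps0 p0)
      moreover obtain a0 b0 where "p0 = (a0, b0)" by fastforce
      ultimately show ?thesis using later[of ps0 a0 b0 d b ps2] ps d by simp
    qed
  qed
qed

lemma shorten_unreduced:
  assumes "set ps \<subseteq> U \<times> U" "\<not> set ps \<subseteq> (U - conj_set G t D) \<times> (U - D)" "x \<in> U"
  shows "\<exists>ps' x'. length ps' < length ps \<and> set ps' \<subseteq> U \<times> U \<and> x' \<in> U \<and>
    conjugate G (syllable_prod G t ps \<otimes> x \<otimes> t) (syllable_prod G t ps' \<otimes> x' \<otimes> t)"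
proof -
  have conjugate_self: "conjugate G (syllable_prod G t ps \<otimes> x \<otimes> t) (syllable_prod G t ps \<otimes> x \<otimes> t)"
    using assms(1,3) pairs_closed by (intro conjugate_refl) auto
  from assms(1,2) show ?thesis
  proof (cases rule: unreduced_cases)
    case (at_D ps1 a b ps2)
    obtain ps' x' where ps': "length ps' < length ps" "set ps' \<subseteq> U \<times> U" "x' \<in> U"
      and eq: "syllable_prod G t ps \<otimes> x = syllable_prod G t ps' \<otimes> x'"
      using shorten_at_D[OF assms(1)[unfolded at_D(1)] at_D(2) assms(3)] unfolding at_D(1) .
    have "conjugate G (syllable_prod G t ps \<otimes> x \<otimes> t) (syllable_prod G t ps' \<otimes> x' \<otimes> t)"
      using conjugate_self unfolding eq .
    then show ?thesis using ps' by blast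
  next
    case (head d b ps2)
    note shortened = shorten_at_head[OF assms(1)[unfolded head(1)] head(2) assms(3)]
    have "x \<otimes> (d \<otimes> b) \<in> U"
      using shortened(1) assms(3) subgroup.m_closed[OF subgroup_U] by blast
    then show ?thesis
      using shortened(2) head assms(1) by (intro exI[of _ ps2] exI[of _ "x \<otimes> (d \<otimes> b)"]) auto
  next
    case (later ps1 a b d b' ps2)
    note shortened = shorten_at_conj_D[OF assms(1)[unfolded later(1)] later(2)]
    then show ?thesis
      using later(1) conjugate_self assms(3)
      by (intro exI[of _ "ps1 @ (a, b \<otimes> d \<otimes> b') # ps2"] exI[of _ x]) auto
  qed
qed

lemma reduce_syllables:
  assumes "set ps \<subseteq> U \<times> U" "x \<in> U"
  shows "\<exists>ps' x'. set ps' \<subseteq> (U - conj_set G t D) \<times> (U - D) \<and> x' \<in> U \<and>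
    conjugate G (syllable_prod G t ps \<otimes> x \<otimes> t) (syllable_prod G t ps' \<otimes> x' \<otimes> t)"
  using assms
proof (induction "length ps" arbitrary: ps x rule: less_induct)
  case less
  show ?case
  proof (cases "set ps \<subseteq> (U - conj_set G t D) \<times> (U - D)")
    case True
    then show ?thesis
      using less.prems pairs_closed by (intro exI[of _ ps] exI[of _ x] conjI conjugate_refl) auto
  next
    case False
    then obtain ps' x' where ps': "length ps' < length ps" "set ps' \<subseteq> U \<times> U" "x' \<in> U"
      and conj: "conjugate G (syllable_prod G t ps \<otimes> x \<otimes> t) (syllable_prod G t ps' \<otimes> x' \<otimes> t)"
      using shorten_unreduced[OF less.prems(1) _ less.prems(2)] by metis
    obtain ps'' x'' where ps'': "set ps'' \<subseteq> (U - conj_set G t D) \<times> (U - D)" "x'' \<in> U"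
      and conj': "conjugate G (syllable_prod G t ps' \<otimes> x' \<otimes> t) (syllable_prod G t ps'' \<otimes> x'' \<otimes> t)"
      using less.hyps[OF ps'] by blast
    have "syllable_prod G t ps \<otimes> x \<otimes> t \<in> carrier G"
      using less.prems pairs_closed by simp
    then show ?thesis
      using ps'' conjugate_trans[OF _ conj conj'] by blast
  qed
qed

end

section \<open>Filtrations by subgroups\<close>

locale stable_letter_filtration = group G for G (structure) +
  fixes t :: 'a and F :: "int \<Rightarrow> 'a set"
  assumes t_closed: "t \<in> carrier G"
    and subgroup_F: "k \<ge> 0 \<Longrightarrow> subgroup (F k) G"
    and F_mono: "k \<ge> 0 \<Longrightarrow> F (k - 1) \<subseteq> F k"
    and conj_F: "k \<ge> 0 \<Longrightarrow> conj_set G t (F (k - 1)) \<subseteq> F k"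
    and F_generated: "k \<ge> 1 \<Longrightarrow> F k \<subseteq> generate G (F (k - 1) \<union> conj_set G t (F (k - 1)))"
begin

definition normal_forms :: "'a set" where
  "normal_forms = {x \<otimes> t | x. x \<in> F 0} \<union>
     {syllable_prod G t ps \<otimes> x \<otimes> t | k ps x. k > 0 \<and> ps \<noteq> [] \<and>
        set ps \<subseteq> (F (k - 1) - conj_set G t (F (k - 2))) \<times> (F (k - 1) - F (k - 2)) \<and>
        x \<in> F (k - 1)}"

theorem conjugate_normal_form:
  "y \<in> F (int n) \<Longrightarrow> \<exists>v \<in> normal_forms. conjugate G (y \<otimes> t) v"
proof (induction n arbitrary: y)
  case 0
  then have "y \<otimes> t \<in> normal_forms" unfolding normal_forms_def by auto
  moreover have "y \<otimes> t \<in> carrier G"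
    using 0 subgroup.mem_carrier[OF subgroup_F[of 0]] t_closed by simp
  ultimately show ?case using conjugate_refl by blast
next
  case (Suc n)
  interpret syllable_reduction G t "F (int n)" "F (int n - 1)"
    by (simp add: syllable_reduction_def syllable_subgroup_def syllable_subgroup_axioms_def
        syllable_reduction_axioms_def is_group t_closed subgroup_F F_mono conj_F)
  have "y \<in> generate G (F (int n) \<union> conj_set G t (F (int n)))"
    using F_generated[of "int (Suc n)"] Suc.prems by auto
  then obtain ps x where ps: "set ps \<subseteq> F (int n) \<times> F (int n)" "x \<in> F (int n)"
    and y: "y = syllable_prod G t ps \<otimes> x"
    using generate_syllables by blast
  obtain ps' x' where ps': "set ps' \<subseteq> (F (int n) - conj_set G t (F (int n - 1))) \<times> (F (int n) - F (int n - 1))"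
    "x' \<in> F (int n)"
    and conj: "conjugate G (y \<otimes> t) (syllable_prod G t ps' \<otimes> x' \<otimes> t)"
    using reduce_syllables[OF ps] y by blast
  have yt: "y \<otimes> t \<in> carrier G" using y ps pairs_closed by simp
  show ?case
  proof (cases "ps' = []")
    case True
    then show ?thesis
      using Suc.IH[OF ps'(2)] ps'(2) conj conjugate_trans[OF yt] by auto
  next
    case False
    then have "syllable_prod G t ps' \<otimes> x' \<otimes> t \<in> normal_forms"
      unfolding normal_forms_def using ps'
      by (intro UnI2 CollectI exI[of _ "int (Suc n)"] exI[of _ ps'] exI[of _ x']) auto
    then show ?thesis using conj by blast
  qed
qed

lemma normal_forms_alt_prod:
  assumes "v \<in> normal_forms"
  shows "(\<exists>x \<in> F 0. v = x \<otimes> t)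
    \<or> (\<exists>k > 0. \<exists>m \<ge> 1. \<exists>a b x.
         (\<forall>i\<in>{1..m}. a i \<in> F (k - 1) - conj_set G t (F (k - 2)) \<and> b i \<in> F (k - 1) - F (k - 2))
         \<and> x \<in> F (k - 1) \<and> v = alt_prod G t a b m \<otimes> x \<otimes> t)"
proof -
  consider (base) x where "x \<in> F 0" "v = x \<otimes> t"
    | (syllables) k ps x where "k > 0" "ps \<noteq> []"
      "set ps \<subseteq> (F (k - 1) - conj_set G t (F (k - 2))) \<times> (F (k - 1) - F (k - 2))"
      "x \<in> F (k - 1)" "v = syllable_prod G t ps \<otimes> x \<otimes> t"
    using assms unfolding normal_forms_def by blast
  then show ?thesis
  proof cases
    case base
    then show ?thesis by blast
  next
    case syllables
    have "set ps \<subseteq> carrier G \<times> carrier G"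
      using syllables(3) subgroup.subset[OF subgroup_F[of "k - 1"]] syllables(1) by auto
    then have "v = alt_prod G t (\<lambda>i. fst (ps ! (i - 1))) (\<lambda>i. snd (ps ! (i - 1))) (length ps) \<otimes> x \<otimes> t"
      using syllables(5) alt_prod_eq_syllable_prod t_closed by simp
    moreover have "\<forall>i\<in>{1..length ps}. fst (ps ! (i - 1)) \<in> F (k - 1) - conj_set G t (F (k - 2))
        \<and> snd (ps ! (i - 1)) \<in> F (k - 1) - F (k - 2)"
    proof
      fix i assume "i \<in> {1..length ps}"
      then have "ps ! (i - 1) \<in> set ps" by (intro nth_mem) auto
      then have "ps ! (i - 1) \<in> (F (k - 1) - conj_set G t (F (k - 2))) \<times> (F (k - 1) - F (k - 2))"
        using syllables(3) by blast
      then show "fst (ps ! (i - 1)) \<in> F (k - 1) - conj_set G t (F (k - 2))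
          \<and> snd (ps ! (i - 1)) \<in> F (k - 1) - F (k - 2)"
        by (simp only: mem_Times_iff)
    qed
    moreover have "length ps \<ge> 1" using syllables(2) by (simp add: Suc_le_eq)
    ultimately show ?thesis using syllables(1,4)
      by (intro disjI2 exI[of _ k] conjI exI[of _ "length ps"] exI[of _ "\<lambda>i. fst (ps ! (i - 1))"]
          exI[of _ "\<lambda>i. snd (ps ! (i - 1))"] exI[of _ x])
  qed
qed

theorem conjugate_alt_prod_form:
  assumes "w \<in> carrier G" "y \<in> F (int n)" "conjugate G w (y \<otimes> t)"
  shows "(\<exists>x \<in> F 0. \<exists>g \<in> carrier G. g \<otimes> w \<otimes> inv g = x \<otimes> t)
    \<or> (\<exists>k > 0. \<exists>m \<ge> 1. \<exists>a b x g.
         (\<forall>i\<in>{1..m}. a i \<in> F (k - 1) - conj_set G t (F (k - 2)) \<and> b i \<in> F (k - 1) - F (k - 2))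
         \<and> x \<in> F (k - 1) \<and> g \<in> carrier G \<and> g \<otimes> w \<otimes> inv g = alt_prod G t a b m \<otimes> x \<otimes> t)"
proof -
  obtain v where v: "v \<in> normal_forms" "conjugate G (y \<otimes> t) v"
    using conjugate_normal_form[OF assms(2)] by blast
  then obtain g where g: "g \<in> carrier G" "g \<otimes> w \<otimes> inv g = v"
    using conjugate_trans[OF assms(1,3)] unfolding conjugate_def by blast
  show ?thesis
    using normal_forms_alt_prod[OF v(1), folded g(2)] g(1) by blast
qed

end

section \<open>The HNN extension\<close>

locale hnn_extension = A: group A + C: group C for A (structure) and C (structure) and iP iN +
  assumes iP_hom: "iP \<in> hom C A" and iN_hom: "iN \<in> hom C A"
begin

abbreviation H where "H \<equiv> HNN A C iP iN"
abbreviation words where "words \<equiv> hnn_words A"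
abbreviation word_eq where "word_eq \<equiv> hnn_eq A C iP iN"
abbreviation word_class where "word_class \<equiv> hnn_class A C iP iN"
abbreviation t where "t \<equiv> hnn_t A C iP iN"
abbreviation incl where "incl \<equiv> hnn_incl A C iP iN"

definition rewrite_step :: "'a hnn_word \<Rightarrow> 'a hnn_word \<Rightarrow> bool" where
  "rewrite_step x y \<longleftrightarrow> (\<exists>u v l r. hnn_basic A C iP iN l r \<and> x = u @ l @ v \<and> y = u @ r @ v)"

lemma word_eq_equivclp: "word_eq = equivclp rewrite_step"
  unfolding hnn_eq_def rewrite_step_def ..

lemma rewrite_step_context: "rewrite_step x y \<Longrightarrow> rewrite_step (u @ x @ v) (u @ y @ v)"
  unfolding rewrite_step_def
proof (elim exE conjE)
  fix u' v' l r assume "hnn_basic A C iP iN l r" "x = u' @ l @ v'" "y = u' @ r @ v'"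
  then show "\<exists>u'' v'' l r. hnn_basic A C iP iN l r \<and> u @ x @ v = u'' @ l @ v'' \<and> u @ y @ v = u'' @ r @ v''"
    by (intro exI[of _ "u @ u'"] exI[of _ "v' @ v"] exI[of _ l] exI[of _ r]) simp
qed

lemma word_eq_context: "word_eq x y \<Longrightarrow> word_eq (u @ x @ v) (u @ y @ v)"
  unfolding word_eq_equivclp
proof (induction rule: equivclp_induct)
  case (step y z)
  then show ?case using equivclp_into_equivclp rewrite_step_context by metis
qed simp

lemma word_eq_basic: "hnn_basic A C iP iN l r \<Longrightarrow> word_eq l r"
  unfolding word_eq_equivclp rewrite_step_def
  by (rule r_into_equivclp) (metis append.left_neutral append.right_neutral)

lemma word_eq_sym: "word_eq x y \<Longrightarrow> word_eq y x"
  unfolding word_eq_equivclp by (rule equivclp_sym)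

lemma word_eq_trans: "word_eq x y \<Longrightarrow> word_eq y z \<Longrightarrow> word_eq x z"
  unfolding word_eq_equivclp by (rule equivclp_trans)

lemma class_eq: "word_eq x y \<Longrightarrow> word_class x = word_class y"
  unfolding hnn_class_def using word_eq_sym word_eq_trans by blast

lemma words_append [simp]: "x @ y \<in> words \<longleftrightarrow> x \<in> words \<and> y \<in> words"
  unfolding hnn_words_def by auto

lemma words_simps [simp]:
  "[] \<in> words" "Inl a # x \<in> words \<longleftrightarrow> a \<in> carrier A \<and> x \<in> words" "Inr b # x \<in> words \<longleftrightarrow> x \<in> words"
  unfolding hnn_words_def by auto

lemma class_mult:
  assumes "x \<in> words" "y \<in> words" shows "word_class x \<otimes>\<^bsub>H\<^esub> word_class y = word_class (x @ y)"
proof -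
  have "x \<in> word_class x" "y \<in> word_class y"
    using assms unfolding hnn_class_def word_eq_equivclp by auto
  then have "(SOME x'. x' \<in> word_class x) \<in> word_class x" "(SOME y'. y' \<in> word_class y) \<in> word_class y"
    by (auto simp: some_in_eq)
  then have "word_eq x (SOME x'. x' \<in> word_class x)" "word_eq y (SOME y'. y' \<in> word_class y)"
    unfolding hnn_class_def by auto
  then have "word_eq (x @ y) ((SOME x'. x' \<in> word_class x) @ y)"
    "word_eq ((SOME x'. x' \<in> word_class x) @ y) ((SOME x'. x' \<in> word_class x) @ (SOME y'. y' \<in> word_class y))"
    using word_eq_context[of _ _ "[]"] word_eq_context[of _ _ _ "[]"] by auto
  then have "word_eq (x @ y) ((SOME x'. x' \<in> word_class x) @ (SOME y'. y' \<in> word_class y))"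
    by (rule word_eq_trans)
  then show ?thesis unfolding HNN_def using class_eq by simp
qed

lemma carrier_HNN: "carrier H = word_class ` words"
  unfolding HNN_def by simp

lemma one_HNN: "\<one>\<^bsub>H\<^esub> = word_class []"
  unfolding HNN_def by simp

fun inv_letter :: "'a + bool \<Rightarrow> 'a + bool" where
  "inv_letter (Inl a) = Inl (inv\<^bsub>A\<^esub> a)"
| "inv_letter (Inr b) = Inr (\<not> b)"

definition inv_word :: "'a hnn_word \<Rightarrow> 'a hnn_word" where
  "inv_word x = rev (map inv_letter x)"

lemma inv_word_closed: "x \<in> words \<Longrightarrow> inv_word x \<in> words"
proof (induction x)
  case (Cons l x)
  then have "x \<in> words" "[inv_letter l] \<in> words" by (cases l; simp)+
  then show ?case using Cons.IH by (simp add: inv_word_def)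
qed (simp add: inv_word_def)

lemma inv_letter_cancel: "[l] \<in> words \<Longrightarrow> word_eq [inv_letter l, l] []"
proof (cases l)
  case (Inl a)
  moreover assume "[l] \<in> words"
  ultimately have "a \<in> carrier A" by simp
  then have "word_eq [Inl (inv\<^bsub>A\<^esub> a), Inl a] [Inl \<one>\<^bsub>A\<^esub>]" "word_eq [Inl \<one>\<^bsub>A\<^esub>] []"
    using word_eq_basic[OF hnn_basic.mult_rel[of "inv\<^bsub>A\<^esub> a" A a]] word_eq_basic[OF hnn_basic.one_rel]
    by auto
  then have "word_eq [Inl (inv\<^bsub>A\<^esub> a), Inl a] []" by (rule word_eq_trans)
  with Inl show ?thesis by simp
next
  case (Inr b)
  then show ?thesis by (cases b) (simp_all add: word_eq_basic hnn_basic.intros)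
qed

lemma inv_word_cancel: "x \<in> words \<Longrightarrow> word_eq (inv_word x @ x) []"
proof (induction x)
  case (Cons l x)
  then have "x \<in> words" "[l] \<in> words" by (cases l; simp)+
  then have "word_eq (inv_word x @ [inv_letter l, l] @ x) (inv_word x @ [] @ x)"
    using inv_letter_cancel word_eq_context by blast
  then have "word_eq (inv_word (l # x) @ l # x) (inv_word x @ x)"
    by (simp add: inv_word_def)
  from this Cons.IH[OF \<open>x \<in> words\<close>] show ?case by (rule word_eq_trans)
qed (simp add: inv_word_def word_eq_equivclp)

lemma group_HNN: "group H"
proof (rule groupI)
  fix U V assume "U \<in> carrier H" "V \<in> carrier H"
  then obtain x y where "x \<in> words" "y \<in> words" "U = word_class x" "V = word_class y"
    by (auto simp: carrier_HNN)
  then show "U \<otimes>\<^bsub>H\<^esub> V \<in> carrier H" by (simp add: class_mult carrier_HNN)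
next
  fix U V W assume "U \<in> carrier H" "V \<in> carrier H" "W \<in> carrier H"
  then obtain x y z where "x \<in> words" "y \<in> words" "z \<in> words"
    "U = word_class x" "V = word_class y" "W = word_class z"
    by (auto simp: carrier_HNN)
  then show "U \<otimes>\<^bsub>H\<^esub> V \<otimes>\<^bsub>H\<^esub> W = U \<otimes>\<^bsub>H\<^esub> (V \<otimes>\<^bsub>H\<^esub> W)"
    by (simp add: class_mult)
next
  fix U assume "U \<in> carrier H"
  then obtain x where x: "x \<in> words" "U = word_class x" by (auto simp: carrier_HNN)
  then show "\<one>\<^bsub>H\<^esub> \<otimes>\<^bsub>H\<^esub> U = U" by (simp add: class_mult one_HNN)
  have "word_class (inv_word x) \<otimes>\<^bsub>H\<^esub> U = \<one>\<^bsub>H\<^esub>"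
    using x inv_word_closed inv_word_cancel class_eq by (simp add: class_mult one_HNN)
  then show "\<exists>U'\<in>carrier H. U' \<otimes>\<^bsub>H\<^esub> U = \<one>\<^bsub>H\<^esub>"
    using x inv_word_closed carrier_HNN by blast
next
  show "\<one>\<^bsub>H\<^esub> \<in> carrier H" by (simp add: carrier_HNN one_HNN)
qed

sublocale H: group H
  by (rule group_HNN)

lemma class_in_carrier [simp]: "x \<in> words \<Longrightarrow> word_class x \<in> carrier H"
  by (simp add: carrier_HNN)

lemma t_closed [simp]: "t \<in> carrier H"
  unfolding hnn_t_def by simp

lemma incl_closed [simp]: "a \<in> carrier A \<Longrightarrow> incl a \<in> carrier H"
  unfolding hnn_incl_def by simp

lemma class_Inr_False: "word_class [Inr False] = inv\<^bsub>H\<^esub> t"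
proof -
  have "word_class [Inr False] \<otimes>\<^bsub>H\<^esub> t = \<one>\<^bsub>H\<^esub>"
    unfolding hnn_t_def one_HNN
    using class_mult[of "[Inr False]" "[Inr True]"] class_eq[OF word_eq_basic[OF hnn_basic.t_inv2]]
    by simp
  then show ?thesis using H.inv_equality by simp
qed

lemma class_Cons:
  assumes "x \<in> words"
  shows "a \<in> carrier A \<Longrightarrow> word_class (Inl a # x) = incl a \<otimes>\<^bsub>H\<^esub> word_class x"
    and "word_class (Inr True # x) = t \<otimes>\<^bsub>H\<^esub> word_class x"
    and "word_class (Inr False # x) = inv\<^bsub>H\<^esub> t \<otimes>\<^bsub>H\<^esub> word_class x"
  using assms class_mult[of "[_]" x, symmetric] class_Inr_False unfolding hnn_incl_def
  by (simp_all add: hnn_t_def)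

lemma incl_hom: "incl \<in> hom A H"
proof (rule homI)
  fix a b assume "a \<in> carrier A" "b \<in> carrier A"
  then show "incl (a \<otimes>\<^bsub>A\<^esub> b) = incl a \<otimes>\<^bsub>H\<^esub> incl b"
    unfolding hnn_incl_def using class_mult[of "[Inl a]" "[Inl b]"]
      class_eq[OF word_eq_basic[OF hnn_basic.mult_rel]] by simp
qed simp

lemma hnn_relation:
  assumes "c \<in> carrier C" shows "inv\<^bsub>H\<^esub> t \<otimes>\<^bsub>H\<^esub> incl (iN c) \<otimes>\<^bsub>H\<^esub> t = incl (iP c)"
proof -
  have "iP c \<in> carrier A" using assms iP_hom by (simp add: hom_def Pi_def)
  moreover have "incl (iN c) = word_class [Inr True, Inl (iP c), Inr False]"
    unfolding hnn_incl_def using class_eq[OF word_eq_basic[OF hnn_basic.hnn_rel[OF assms]]] .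
  ultimately have "incl (iN c) = t \<otimes>\<^bsub>H\<^esub> (incl (iP c) \<otimes>\<^bsub>H\<^esub> inv\<^bsub>H\<^esub> t)"
    using class_Cons[of "[]"] class_Cons[of "[Inr False]"] class_Cons[of "[Inl (iP c), Inr False]"]
    by (simp add: one_HNN[symmetric])
  with \<open>iP c \<in> carrier A\<close> show ?thesis by (simp add: H.m_assoc)
qed

lemma hnn_p_class:
  assumes "x \<in> words" shows "hnn_p (word_class x) = sum_list (map letter_exp x)"
proof -
  have "sum_list (map letter_exp y) = sum_list (map letter_exp z)" if "word_eq y z" for y z
    using that unfolding word_eq_equivclp
  proof (induction rule: equivclp_induct)
    case (step z z')
    have "sum_list (map letter_exp l) = sum_list (map letter_exp r)" if "hnn_basic A C iP iN l r" for l r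
      using that by (induction rule: hnn_basic.induct) auto
    then show ?case using step unfolding rewrite_step_def by auto
  qed simp
  moreover have "x \<in> word_class x"
    using assms unfolding hnn_class_def word_eq_equivclp by simp
  then have "(SOME y. y \<in> word_class x) \<in> word_class x"
    by (auto simp: some_in_eq)
  ultimately show ?thesis unfolding hnn_p_def hnn_class_def by auto
qed

definition Ak_gens :: "nat \<Rightarrow> 'a hnn_word set set" where
  "Ak_gens n = {inv\<^bsub>H\<^esub> (t [^]\<^bsub>H\<^esub> i) \<otimes>\<^bsub>H\<^esub> incl a \<otimes>\<^bsub>H\<^esub> (t [^]\<^bsub>H\<^esub> i) | a i. a \<in> carrier A \<and> i \<le> n}"

lemma Ak_gensI:
  "a \<in> carrier A \<Longrightarrow> i \<le> n \<Longrightarrow> inv\<^bsub>H\<^esub> (t [^]\<^bsub>H\<^esub> i) \<otimes>\<^bsub>H\<^esub> incl a \<otimes>\<^bsub>H\<^esub> (t [^]\<^bsub>H\<^esub> i) \<in> Ak_gens n"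
  unfolding Ak_gens_def by blast

lemma hnn_Ak_int: "hnn_Ak A C iP iN (int n) = generate H (Ak_gens n)"
  unfolding hnn_Ak_def Ak_gens_def by simp

lemma Ak_gens_closed: "Ak_gens n \<subseteq> carrier H"
  unfolding Ak_gens_def by auto

lemma Ak_gens_mono: "m \<le> n \<Longrightarrow> Ak_gens m \<subseteq> Ak_gens n"
  unfolding Ak_gens_def using order_trans by blast

lemma incl_in_Ak_gens: "a \<in> carrier A \<Longrightarrow> incl a \<in> Ak_gens n"
  using Ak_gensI[of a 0 n] by simp

lemma Ak_gens_0: "Ak_gens 0 \<subseteq> incl ` carrier A"
proof
  fix g assume "g \<in> Ak_gens 0"
  then obtain a where "a \<in> carrier A" "g = inv\<^bsub>H\<^esub> (t [^]\<^bsub>H\<^esub> (0::nat)) \<otimes>\<^bsub>H\<^esub> incl a \<otimes>\<^bsub>H\<^esub> (t [^]\<^bsub>H\<^esub> (0::nat))"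
    unfolding Ak_gens_def by blast
  then show "g \<in> incl ` carrier A" by simp
qed

lemma conj_t_pow:
  "Z \<in> carrier H \<Longrightarrow> inv\<^bsub>H\<^esub> t \<otimes>\<^bsub>H\<^esub> (inv\<^bsub>H\<^esub> (t [^]\<^bsub>H\<^esub> i) \<otimes>\<^bsub>H\<^esub> Z \<otimes>\<^bsub>H\<^esub> t [^]\<^bsub>H\<^esub> i) \<otimes>\<^bsub>H\<^esub> t
     = inv\<^bsub>H\<^esub> (t [^]\<^bsub>H\<^esub> Suc i) \<otimes>\<^bsub>H\<^esub> Z \<otimes>\<^bsub>H\<^esub> t [^]\<^bsub>H\<^esub> Suc i"
  by (simp add: H.inv_mult_group H.m_assoc)

lemma conj_Ak_gens: "conj_set H t (Ak_gens n) \<subseteq> Ak_gens (Suc n)"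
proof
  fix g assume "g \<in> conj_set H t (Ak_gens n)"
  then obtain a i where a: "a \<in> carrier A" "i \<le> n"
    and "g = inv\<^bsub>H\<^esub> t \<otimes>\<^bsub>H\<^esub> (inv\<^bsub>H\<^esub> (t [^]\<^bsub>H\<^esub> i) \<otimes>\<^bsub>H\<^esub> incl a \<otimes>\<^bsub>H\<^esub> (t [^]\<^bsub>H\<^esub> i)) \<otimes>\<^bsub>H\<^esub> t"
    unfolding Ak_gens_def by blast
  then have "g = inv\<^bsub>H\<^esub> (t [^]\<^bsub>H\<^esub> Suc i) \<otimes>\<^bsub>H\<^esub> incl a \<otimes>\<^bsub>H\<^esub> (t [^]\<^bsub>H\<^esub> Suc i)"
    using conj_t_pow[OF incl_closed] by simp
  then show "g \<in> Ak_gens (Suc n)" using Ak_gensI[of a "Suc i" "Suc n"] a by simp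
qed

lemma conj_t_hom: "group_hom H H (\<lambda>y. inv\<^bsub>H\<^esub> t \<otimes>\<^bsub>H\<^esub> y \<otimes>\<^bsub>H\<^esub> t)"
proof (intro group_hom.intro group_hom_axioms.intro homI)
  fix x y assume "x \<in> carrier H" "y \<in> carrier H"
  then show "inv\<^bsub>H\<^esub> t \<otimes>\<^bsub>H\<^esub> (x \<otimes>\<^bsub>H\<^esub> y) \<otimes>\<^bsub>H\<^esub> t
      = inv\<^bsub>H\<^esub> t \<otimes>\<^bsub>H\<^esub> x \<otimes>\<^bsub>H\<^esub> t \<otimes>\<^bsub>H\<^esub> (inv\<^bsub>H\<^esub> t \<otimes>\<^bsub>H\<^esub> y \<otimes>\<^bsub>H\<^esub> t)"
    by (simp add: H.m_assoc)
qed (simp_all add: group_HNN)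

lemma conj_generate_Ak_gens:
  "conj_set H t (generate H (Ak_gens n)) \<subseteq> generate H (Ak_gens (Suc n))"
proof -
  have "conj_set H t (generate H (Ak_gens n)) = generate H (conj_set H t (Ak_gens n))"
    unfolding Setcompr_eq_image by (rule group_hom.generate_img[OF conj_t_hom Ak_gens_closed, symmetric])
  then show ?thesis using H.mono_generate[OF conj_Ak_gens] by simp
qed

lemma generate_Ak_gens_Suc:
  "generate H (Ak_gens (Suc n))
     \<subseteq> generate H (generate H (Ak_gens n) \<union> conj_set H t (generate H (Ak_gens n)))"
proof (rule H.generate_subgroup_incl)
  show "Ak_gens (Suc n) \<subseteq> generate H (generate H (Ak_gens n) \<union> conj_set H t (generate H (Ak_gens n)))"
  proof
    fix g assume "g \<in> Ak_gens (Suc n)"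
    then obtain a i where a: "a \<in> carrier A" "i \<le> Suc n"
      and g: "g = inv\<^bsub>H\<^esub> (t [^]\<^bsub>H\<^esub> i) \<otimes>\<^bsub>H\<^esub> incl a \<otimes>\<^bsub>H\<^esub> (t [^]\<^bsub>H\<^esub> i)"
      unfolding Ak_gens_def by blast
    have "g \<in> generate H (Ak_gens n) \<union> conj_set H t (generate H (Ak_gens n))"
    proof (cases "i = Suc n")
      case True
      have "inv\<^bsub>H\<^esub> (t [^]\<^bsub>H\<^esub> n) \<otimes>\<^bsub>H\<^esub> incl a \<otimes>\<^bsub>H\<^esub> (t [^]\<^bsub>H\<^esub> n) \<in> generate H (Ak_gens n)"
        using a by (blast intro: generate.incl Ak_gensI)
      moreover have "g = inv\<^bsub>H\<^esub> t \<otimes>\<^bsub>H\<^esub> (inv\<^bsub>H\<^esub> (t [^]\<^bsub>H\<^esub> n) \<otimes>\<^bsub>H\<^esub> incl a \<otimes>\<^bsub>H\<^esub> (t [^]\<^bsub>H\<^esub> n)) \<otimes>\<^bsub>H\<^esub> t"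
        using conj_t_pow[OF incl_closed[OF a(1)], of n] g True by simp
      ultimately show ?thesis by blast
    next
      case False
      then have "i \<le> n" using a by simp
      then have "g \<in> Ak_gens n" using a g by (simp add: Ak_gensI)
      then show ?thesis by (blast intro: generate.incl)
    qed
    then show "g \<in> generate H (generate H (Ak_gens n) \<union> conj_set H t (generate H (Ak_gens n)))"
      by (rule generate.incl)
  qed
  show "subgroup (generate H (generate H (Ak_gens n) \<union> conj_set H t (generate H (Ak_gens n)))) H"
  proof (rule H.generate_is_subgroup)
    have "generate H (Ak_gens n) \<subseteq> carrier H"
      by (rule H.generate_incl[OF Ak_gens_closed])
    moreover from this have "conj_set H t (generate H (Ak_gens n)) \<subseteq> carrier H"
      by auto
    ultimately show "generate H (Ak_gens n) \<union> conj_set H t (generate H (Ak_gens n)) \<subseteq> carrier H"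
      by blast
  qed
qed

lemma hnn_Ak_0: "hnn_Ak A C iP iN 0 \<subseteq> incl ` carrier A"
proof -
  have "subgroup (incl ` carrier A) H"
    using incl_hom by (intro group_hom.img_is_subgroup) (simp add: group_hom_def group_hom_axioms_def group_HNN)
  then show ?thesis
    using H.generate_subgroup_incl[OF Ak_gens_0] hnn_Ak_int[of 0] by simp
qed

lemma hnn_Ak_pred:
  "hnn_Ak A C iP iN (int n - 1) = (if n = 0 then incl ` iN ` carrier C else generate H (Ak_gens (n - 1)))"
  by (cases n) (simp_all add: hnn_Ak_def flip: hnn_Ak_int)

lemma hnn_Ak_filtration: "stable_letter_filtration H t (hnn_Ak A C iP iN)"
proof (intro stable_letter_filtration.intro stable_letter_filtration_axioms.intro group_HNN t_closed)
  have iN_A: "iN c \<in> carrier A" and iP_A: "iP c \<in> carrier A" if "c \<in> carrier C" for c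
    using that iN_hom iP_hom by (simp_all add: hom_def Pi_def)
  fix k :: int assume "0 \<le> k"
  then obtain n where k: "k = int n" using nonneg_int_cases by blast
  show "subgroup (hnn_Ak A C iP iN k) H"
    unfolding k hnn_Ak_int by (rule H.generate_is_subgroup[OF Ak_gens_closed])
  show "hnn_Ak A C iP iN (k - 1) \<subseteq> hnn_Ak A C iP iN k"
  proof (cases n)
    case 0
    have "incl (iN c) \<in> generate H (Ak_gens 0)" if "c \<in> carrier C" for c
      using that iN_A incl_in_Ak_gens by (blast intro: generate.incl)
    then show ?thesis unfolding k hnn_Ak_pred hnn_Ak_int using 0 by auto
  next
    case (Suc m)
    then show ?thesis unfolding k hnn_Ak_pred hnn_Ak_int
      by (simp add: H.mono_generate Ak_gens_mono)
  qed
  show "conj_set H t (hnn_Ak A C iP iN (k - 1)) \<subseteq> hnn_Ak A C iP iN k"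
  proof (cases n)
    case 0
    have "inv\<^bsub>H\<^esub> t \<otimes>\<^bsub>H\<^esub> incl (iN c) \<otimes>\<^bsub>H\<^esub> t \<in> generate H (Ak_gens 0)" if "c \<in> carrier C" for c
      using that iP_A incl_in_Ak_gens hnn_relation by (metis generate.incl)
    then show ?thesis unfolding k hnn_Ak_pred hnn_Ak_int using 0 by auto
  next
    case (Suc m)
    then show ?thesis unfolding k hnn_Ak_pred hnn_Ak_int
      using conj_generate_Ak_gens by simp
  qed
next
  fix k :: int assume "1 \<le> k"
  define m where "m = nat (k - 1)"
  have k: "k = int (Suc m)" using \<open>1 \<le> k\<close> unfolding m_def by simp
  show "hnn_Ak A C iP iN k
      \<subseteq> generate H (hnn_Ak A C iP iN (k - 1) \<union> conj_set H t (hnn_Ak A C iP iN (k - 1)))"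
    unfolding k hnn_Ak_pred hnn_Ak_int using generate_Ak_gens_Suc by simp
qed

definition Ak_conjugates :: "'a hnn_word set set" where
  "Ak_conjugates = {t [^]\<^bsub>H\<^esub> j \<otimes>\<^bsub>H\<^esub> y \<otimes>\<^bsub>H\<^esub> inv\<^bsub>H\<^esub> (t [^]\<^bsub>H\<^esub> j) | (j::nat) n y. y \<in> generate H (Ak_gens n)}"

lemma Ak_conjugatesI:
  "y \<in> generate H (Ak_gens n) \<Longrightarrow> t [^]\<^bsub>H\<^esub> (j::nat) \<otimes>\<^bsub>H\<^esub> y \<otimes>\<^bsub>H\<^esub> inv\<^bsub>H\<^esub> (t [^]\<^bsub>H\<^esub> j) \<in> Ak_conjugates"
  unfolding Ak_conjugates_def by blast

lemma Ak_conjugatesE: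
  assumes "k \<in> Ak_conjugates"
  obtains j :: nat and n y where "y \<in> generate H (Ak_gens n)" "y \<in> carrier H"
    "k = t [^]\<^bsub>H\<^esub> j \<otimes>\<^bsub>H\<^esub> y \<otimes>\<^bsub>H\<^esub> inv\<^bsub>H\<^esub> (t [^]\<^bsub>H\<^esub> j)"
  using assms H.generate_incl[OF Ak_gens_closed] unfolding Ak_conjugates_def by blast

lemma Ak_conjugates_closed: "k \<in> Ak_conjugates \<Longrightarrow> k \<in> carrier H"
  by (elim Ak_conjugatesE) simp

lemma incl_mult_Ak_conjugates:
  assumes "a \<in> carrier A" "k \<in> Ak_conjugates" shows "incl a \<otimes>\<^bsub>H\<^esub> k \<in> Ak_conjugates"
proof -
  obtain j :: nat and n y where y: "y \<in> generate H (Ak_gens n)" "y \<in> carrier H"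
    and k: "k = t [^]\<^bsub>H\<^esub> j \<otimes>\<^bsub>H\<^esub> y \<otimes>\<^bsub>H\<^esub> inv\<^bsub>H\<^esub> (t [^]\<^bsub>H\<^esub> j)"
    using assms(2) by (rule Ak_conjugatesE)
  define g where "g = inv\<^bsub>H\<^esub> (t [^]\<^bsub>H\<^esub> j) \<otimes>\<^bsub>H\<^esub> incl a \<otimes>\<^bsub>H\<^esub> t [^]\<^bsub>H\<^esub> j"
  have "g \<in> Ak_gens (max n j)"
    unfolding g_def using assms(1) by (rule Ak_gensI) simp
  then have "g \<in> generate H (Ak_gens (max n j))"
    by (rule generate.incl)
  moreover have "y \<in> generate H (Ak_gens (max n j))"
    using y(1) H.mono_generate[OF Ak_gens_mono[of n "max n j"]] by auto
  ultimately have "g \<otimes>\<^bsub>H\<^esub> y \<in> generate H (Ak_gens (max n j))"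
    by (rule generate.eng)
  moreover have "incl a \<otimes>\<^bsub>H\<^esub> k = t [^]\<^bsub>H\<^esub> j \<otimes>\<^bsub>H\<^esub> (g \<otimes>\<^bsub>H\<^esub> y) \<otimes>\<^bsub>H\<^esub> inv\<^bsub>H\<^esub> (t [^]\<^bsub>H\<^esub> j)"
    using assms(1) y(2) unfolding k g_def by (simp add: H.m_assoc)
  ultimately show ?thesis by (simp add: Ak_conjugatesI)
qed

lemma t_conj_Ak_conjugates:
  assumes "k \<in> Ak_conjugates" shows "t \<otimes>\<^bsub>H\<^esub> k \<otimes>\<^bsub>H\<^esub> inv\<^bsub>H\<^esub> t \<in> Ak_conjugates"
proof -
  obtain j :: nat and n y where y: "y \<in> generate H (Ak_gens n)" "y \<in> carrier H"
    and k: "k = t [^]\<^bsub>H\<^esub> j \<otimes>\<^bsub>H\<^esub> y \<otimes>\<^bsub>H\<^esub> inv\<^bsub>H\<^esub> (t [^]\<^bsub>H\<^esub> j)"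
    using assms by (rule Ak_conjugatesE)
  have "t \<otimes>\<^bsub>H\<^esub> k \<otimes>\<^bsub>H\<^esub> inv\<^bsub>H\<^esub> t
      = (t \<otimes>\<^bsub>H\<^esub> t [^]\<^bsub>H\<^esub> j) \<otimes>\<^bsub>H\<^esub> y \<otimes>\<^bsub>H\<^esub> inv\<^bsub>H\<^esub> (t \<otimes>\<^bsub>H\<^esub> t [^]\<^bsub>H\<^esub> j)"
    using y(2) unfolding k by (simp add: H.m_assoc H.inv_mult_group)
  then show ?thesis
    using Ak_conjugatesI[OF y(1), of "Suc j"] unfolding H.nat_pow_Suc2[OF t_closed] by simp
qed

lemma inv_t_conj_Ak_conjugates:
  assumes "k \<in> Ak_conjugates" shows "inv\<^bsub>H\<^esub> t \<otimes>\<^bsub>H\<^esub> k \<otimes>\<^bsub>H\<^esub> t \<in> Ak_conjugates"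
proof -
  obtain j :: nat and n y where y: "y \<in> generate H (Ak_gens n)" "y \<in> carrier H"
    and k: "k = t [^]\<^bsub>H\<^esub> j \<otimes>\<^bsub>H\<^esub> y \<otimes>\<^bsub>H\<^esub> inv\<^bsub>H\<^esub> (t [^]\<^bsub>H\<^esub> j)"
    using assms by (rule Ak_conjugatesE)
  show ?thesis
  proof (cases j)
    case 0
    have "inv\<^bsub>H\<^esub> t \<otimes>\<^bsub>H\<^esub> y \<otimes>\<^bsub>H\<^esub> t \<in> generate H (Ak_gens (Suc n))"
      using y(1) conj_generate_Ak_gens by blast
    from Ak_conjugatesI[OF this, of 0] show ?thesis using y(2) unfolding k 0 by simp
  next
    case (Suc i)
    have "inv\<^bsub>H\<^esub> t \<otimes>\<^bsub>H\<^esub> k \<otimes>\<^bsub>H\<^esub> t = t [^]\<^bsub>H\<^esub> i \<otimes>\<^bsub>H\<^esub> y \<otimes>\<^bsub>H\<^esub> inv\<^bsub>H\<^esub> (t [^]\<^bsub>H\<^esub> i)"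
      using y(2) unfolding k Suc H.nat_pow_Suc2[OF t_closed] by (simp add: H.m_assoc H.inv_mult_group)
    then show ?thesis using Ak_conjugatesI[OF y(1)] by simp
  qed
qed

lemma word_class_decomposition:
  "x \<in> words \<Longrightarrow> \<exists>k \<in> Ak_conjugates. word_class x = k \<otimes>\<^bsub>H\<^esub> t [^]\<^bsub>H\<^esub> sum_list (map letter_exp x)"
proof (induction x)
  case Nil
  have "\<one>\<^bsub>H\<^esub> \<in> Ak_conjugates"
    using Ak_conjugatesI[OF generate.one, where j = 0] by simp
  then show ?case by (intro bexI[of _ "\<one>\<^bsub>H\<^esub>"]) (simp_all add: one_HNN[symmetric])
next
  case (Cons l x)
  then have x: "x \<in> words" by (cases l) auto
  then obtain k where k: "k \<in> Ak_conjugates" and k_closed: "k \<in> carrier H"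
    and eq: "word_class x = k \<otimes>\<^bsub>H\<^esub> t [^]\<^bsub>H\<^esub> sum_list (map letter_exp x)"
    using Cons.IH Ak_conjugates_closed by blast
  define e where "e = sum_list (map letter_exp x)"
  show ?case
  proof (cases l)
    case (Inl a)
    then have a: "a \<in> carrier A" using Cons.prems by simp
    have "word_class (l # x) = (incl a \<otimes>\<^bsub>H\<^esub> k) \<otimes>\<^bsub>H\<^esub> t [^]\<^bsub>H\<^esub> e"
      using class_Cons(1)[OF x a] eq a k_closed unfolding Inl e_def by (simp add: H.m_assoc)
    then show ?thesis using incl_mult_Ak_conjugates[OF a k] Inl unfolding e_def by auto
  next
    case (Inr b)
    show ?thesis
    proof (cases b)
      case True
      have "t [^]\<^bsub>H\<^esub> (1 + e) = t \<otimes>\<^bsub>H\<^esub> t [^]\<^bsub>H\<^esub> e"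
        by (simp add: H.int_pow_mult)
      then have "word_class (l # x) = (t \<otimes>\<^bsub>H\<^esub> k \<otimes>\<^bsub>H\<^esub> inv\<^bsub>H\<^esub> t) \<otimes>\<^bsub>H\<^esub> t [^]\<^bsub>H\<^esub> (1 + e)"
        using class_Cons(2)[OF x] eq k_closed True unfolding Inr e_def by (simp add: H.m_assoc)
      then show ?thesis using t_conj_Ak_conjugates[OF k] Inr True unfolding e_def by auto
    next
      case False
      have "t [^]\<^bsub>H\<^esub> (-1 + e) = inv\<^bsub>H\<^esub> t \<otimes>\<^bsub>H\<^esub> t [^]\<^bsub>H\<^esub> e"
        using H.int_pow_mult[of t "-1" e] H.int_pow_neg[of t 1] by simp
      then have "word_class (l # x) = (inv\<^bsub>H\<^esub> t \<otimes>\<^bsub>H\<^esub> k \<otimes>\<^bsub>H\<^esub> t) \<otimes>\<^bsub>H\<^esub> t [^]\<^bsub>H\<^esub> (-1 + e)"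
        using class_Cons(3)[OF x] eq k_closed False unfolding Inr e_def by (simp add: H.m_assoc)
      then show ?thesis using inv_t_conj_Ak_conjugates[OF k] Inr False unfolding e_def by auto
    qed
  qed
qed

lemma conjugate_Ak_times_t:
  assumes "w \<in> carrier H" "hnn_p w = 1"
  shows "\<exists>n. \<exists>y \<in> hnn_Ak A C iP iN (int n). conjugate H w (y \<otimes>\<^bsub>H\<^esub> t)"
proof -
  obtain x where x: "x \<in> words" and w: "w = word_class x"
    using assms(1) by (auto simp: carrier_HNN)
  then have "sum_list (map letter_exp x) = 1" using assms(2) hnn_p_class by simp
  then obtain k where "k \<in> Ak_conjugates" "w = k \<otimes>\<^bsub>H\<^esub> t"
    using word_class_decomposition[OF x] w by auto
  then obtain j :: nat and n y where y: "y \<in> generate H (Ak_gens n)" "y \<in> carrier H"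
    and w_eq: "w = t [^]\<^bsub>H\<^esub> j \<otimes>\<^bsub>H\<^esub> y \<otimes>\<^bsub>H\<^esub> inv\<^bsub>H\<^esub> (t [^]\<^bsub>H\<^esub> j) \<otimes>\<^bsub>H\<^esub> t"
    by (auto elim: Ak_conjugatesE)
  have "t \<otimes>\<^bsub>H\<^esub> t [^]\<^bsub>H\<^esub> j = t [^]\<^bsub>H\<^esub> j \<otimes>\<^bsub>H\<^esub> t"
    using H.nat_pow_Suc2[OF t_closed, of j] by simp
  then have "inv\<^bsub>H\<^esub> (t [^]\<^bsub>H\<^esub> j) \<otimes>\<^bsub>H\<^esub> w \<otimes>\<^bsub>H\<^esub> inv\<^bsub>H\<^esub> (inv\<^bsub>H\<^esub> (t [^]\<^bsub>H\<^esub> j)) = y \<otimes>\<^bsub>H\<^esub> t"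
    using y(2) unfolding w_eq by (simp add: H.m_assoc flip: H.m_assoc[of t])
  then have "conjugate H w (y \<otimes>\<^bsub>H\<^esub> t)"
    by (intro H.conjugateI[of "inv\<^bsub>H\<^esub> (t [^]\<^bsub>H\<^esub> j)"]) simp_all
  then show ?thesis using y(1) hnn_Ak_int by blast
qed

end

theorem lemma6p2:
  fixes A :: "('a, 'm) monoid_scheme" and C :: "('c, 'n) monoid_scheme"
    and iP iN :: "'c \<Rightarrow> 'a" and w :: "'a hnn_word set"
  assumes "group A" and "group C"
    and "iP \<in> hom C A" and "inj_on iP (carrier C)"
    and "iN \<in> hom C A" and "inj_on iN (carrier C)"
    and "w \<in> carrier (HNN A C iP iN)"
    and "hnn_p w = 1"
  shows "(\<exists>a \<in> carrier A. \<exists>g \<in> carrier (HNN A C iP iN).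
            g \<otimes>\<^bsub>HNN A C iP iN\<^esub> w \<otimes>\<^bsub>HNN A C iP iN\<^esub> inv\<^bsub>HNN A C iP iN\<^esub> g
            = hnn_incl A C iP iN a \<otimes>\<^bsub>HNN A C iP iN\<^esub> hnn_t A C iP iN)
       \<or> (\<exists>k::int. k > 0 \<and> (\<exists>m::nat. m \<ge> 1 \<and> (\<exists>a b x g.
            (\<forall>i\<in>{1..m}.
               a i \<in> hnn_Ak A C iP iN (k - 1)
                 - {inv\<^bsub>HNN A C iP iN\<^esub> hnn_t A C iP iN \<otimes>\<^bsub>HNN A C iP iN\<^esub> y
                      \<otimes>\<^bsub>HNN A C iP iN\<^esub> hnn_t A C iP iN | y. y \<in> hnn_Ak A C iP iN (k - 2)}
             \<and> b i \<in> hnn_Ak A C iP iN (k - 1) - hnn_Ak A C iP iN (k - 2))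
            \<and> x \<in> hnn_Ak A C iP iN (k - 1)
            \<and> g \<in> carrier (HNN A C iP iN)
            \<and> g \<otimes>\<^bsub>HNN A C iP iN\<^esub> w \<otimes>\<^bsub>HNN A C iP iN\<^esub> inv\<^bsub>HNN A C iP iN\<^esub> g
              = alt_prod (HNN A C iP iN) (hnn_t A C iP iN) a b m
                  \<otimes>\<^bsub>HNN A C iP iN\<^esub> x \<otimes>\<^bsub>HNN A C iP iN\<^esub> hnn_t A C iP iN)))"
proof -
  interpret hnn_extension A C iP iN
    using assms(1-3,5) by (simp add: hnn_extension_def hnn_extension_axioms_def)
  interpret F: stable_letter_filtration H t "hnn_Ak A C iP iN"
    by (rule hnn_Ak_filtration)
  obtain n y where "y \<in> hnn_Ak A C iP iN (int n)" "conjugate H w (y \<otimes>\<^bsub>H\<^esub> t)"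
    using conjugate_Ak_times_t[OF assms(7,8)] by blast
  from F.conjugate_alt_prod_form[OF assms(7) this] hnn_Ak_0 show ?thesis
    by blast
qed

end
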